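(* Let $A\in\mathbb{R}^{n\times n}$ be symmetric positive definite. Let $S$ be the operator of one V-cycle of the classical (Ruge–Stüben) algebraic multigrid method for $A$ with Gauss–Seidel smoothing on every level: with levels $l=L,\dots,0$, $A_L=A$, full-column-rank interpolation matrices $P_l$ and $A_l=P_l^TA_{l+1}P_l$, the level operators are defined recursively by $B_0=A_0^{-1}$ and $I-B_lA_l=(I-S_l^TA_l)(I-P_{l-1}B_{l-1}P_{l-1}^TA_l)(I-S_lA_l)$ for $l\ge1$, where $S_l$ is the (forward) Gauss–Seidel smoother for $A_l$, and $S=B_L$. Let $B$ be the ILU($k$) preconditioner for $A$, which for SPD $A$ is the incomplete Cholesky preconditioner IC($k$), $B=(LL^T)^{-1}$. Define $B_{\mathrm{co}}$ by $I-B_{\mathrm{co}}A=(I-S^TA)(I-BA)(I-SA)$. Then $B_{\mathrm{co}}$ is symmetric positive definite.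
   Context: ILU($k$)/IC($k$) is incomplete factorization by Gaussian elimination in which fill-in entries are dropped according to their level of fill: initially $\mathcal L_{ij}=0$ if $a_{ij}\ne0$ or $i=j$ and $\mathcal L_{ij}=\infty$ otherwise; when an entry is updated by $a_{ij}:=a_{ij}-a_{ik}a_{kj}$, its level is updated by $\mathcal L_{ij}=\min\{\mathcal L_{ij},\mathcal L_{ik}+\mathcal L_{kj}+1\}$, and entries with level greater than $k$ are set to zero. The incomplete Cholesky factor $L$ is lower triangular and the factorization is assumed to be well defined (real, with positive diagonal). Gauss–Seidel smoother $S_l=(D_l+L_l)^{-1}$ with $D_l$, $L_l$ the diagonal and strictly lower triangular parts of $A_l$; transposes are Euclidean transposes. *)

theory Defs
  imports Complex_Main "HOL-Library.Extended_Nat" "Jordan_Normal_Form.Matrix"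
begin

definition spd :: "real mat \<Rightarrow> nat \<Rightarrow> bool" where
  "spd M n \<longleftrightarrow> M \<in> carrier_mat n n \<and> transpose_mat M = M \<and>
     (\<forall>v \<in> carrier_vec n. v \<noteq> 0\<^sub>v n \<longrightarrow> scalar_prod v (M *\<^sub>v v) > 0)"

definition full_col_rank :: "real mat \<Rightarrow> bool" where
  "full_col_rank P \<longleftrightarrow>
     (\<forall>v \<in> carrier_vec (dim_col P). P *\<^sub>v v = 0\<^sub>v (dim_row P) \<longrightarrow> v = 0\<^sub>v (dim_col P))"

(* D + L : diagonal plus strictly lower triangular part of a square matrix;
   the forward Gauss-Seidel smoother is S = (D + L)^{-1} *)
definition gs_part :: "real mat \<Rightarrow> real mat" where
  "gs_part M = mat (dim_row M) (dim_col M) (\<lambda>(i,j). if j \<le> i then M $$ (i,j) else 0)"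

(* ILU(k) by Gaussian elimination with level-of-fill dropping.
   State: entries a and levels lev (enat, \<infinity> = never filled). *)
type_synonym iluk_st = "(nat \<Rightarrow> nat \<Rightarrow> real) \<times> (nat \<Rightarrow> nat \<Rightarrow> enat)"

definition kept :: "nat \<Rightarrow> iluk_st \<Rightarrow> nat \<Rightarrow> nat \<Rightarrow> real" where
  "kept k st i j = (if snd st i j \<le> enat k then fst st i j else 0)"

(* elimination step with pivot p: multipliers stored in column p below the diagonal,
   a_ij := a_ij - a_ip a_pj and lev_ij := min lev_ij (lev_ip + lev_pj + 1) for i,j > p *)
definition iluk_step :: "nat \<Rightarrow> nat \<Rightarrow> iluk_st \<Rightarrow> iluk_st" where
  "iluk_step k p st =
     ((\<lambda>i j. if p < i \<and> j = p then kept k st i p / kept k st p p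
            else if p < i \<and> p < j then fst st i j - (kept k st i p / kept k st p p) * kept k st p j
            else fst st i j),
      (\<lambda>i j. if p < i \<and> p < j then min (snd st i j) (snd st i p + snd st p j + 1)
            else snd st i j))"

fun iluk_state :: "nat \<Rightarrow> real mat \<Rightarrow> nat \<Rightarrow> iluk_st" where
  "iluk_state k A 0 = ((\<lambda>i j. A $$ (i,j)),
                       (\<lambda>i j. if A $$ (i,j) \<noteq> 0 \<or> i = j then 0 else \<infinity>))"
| "iluk_state k A (Suc p) = iluk_step k p (iluk_state k A p)"

definition iluk_final :: "nat \<Rightarrow> real mat \<Rightarrow> iluk_st" where
  "iluk_final k A = iluk_state k A (dim_row A)"

definition iluk_pivot :: "nat \<Rightarrow> real mat \<Rightarrow> nat \<Rightarrow> real" where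
  "iluk_pivot k A j = kept k (iluk_final k A) j j"

definition iluk_L :: "nat \<Rightarrow> real mat \<Rightarrow> real mat" where
  "iluk_L k A = mat (dim_row A) (dim_row A)
     (\<lambda>(i,j). if i = j then 1 else if j < i then kept k (iluk_final k A) i j else 0)"

definition iluk_U :: "nat \<Rightarrow> real mat \<Rightarrow> real mat" where
  "iluk_U k A = mat (dim_row A) (dim_row A)
     (\<lambda>(i,j). if i \<le> j then kept k (iluk_final k A) i j else 0)"

(* IC(k) factor for SPD A: L = L_unit * D^(1/2), where D = diag(U); then L L^T = L_unit U *)
definition ick_factor :: "nat \<Rightarrow> real mat \<Rightarrow> real mat" where
  "ick_factor k A = mat (dim_row A) (dim_row A)
     (\<lambda>(i,j). iluk_L k A $$ (i,j) * sqrt (iluk_pivot k A j))"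

end

theory Submission
  imports Defs "Jordan_Normal_Form.Determinant"
begin

text \<open>For a preconditioner \<open>X\<close> of an SPD matrix \<open>A\<close>, \<open>X\<close> is symmetric iff its error operator
  \<open>I - X A\<close> is selfadjoint in the \<open>A\<close>-inner product, since \<open>(A x)\<^sup>T X (A y) = \<langle>x, y\<rangle>\<^sub>A -
  \<langle>x, (I - X A) y\<rangle>\<^sub>A\<close>. Going up the V-cycle one propagates the invariant that \<open>I - B\<^sub>l A\<^sub>l\<close> is
  \<open>A\<^sub>l\<close>-selfadjoint with spectrum in \<open>[0, 1]\<close>: it holds trivially on the coarsest level, the
  Galerkin relation transfers it to the coarse-grid correction \<open>I - P B P\<^sup>T A\<close>, and the
  Gauss--Seidel sweeps \<open>I - S A\<close> and \<open>I - S\<^sup>T A\<close> are mutually \<open>A\<close>-adjoint and \<open>A\<close>-nonexpansive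
  (because \<open>A \<le> (D + L) + (D + L)\<^sup>T\<close>), so sandwiching preserves it. The IC preconditioner is SPD
  as the inverse of a Gram matrix. Finally, with \<open>T = I - S A\<close> and \<open>y = A\<^sup>-\<^sup>1 z\<close>,
  \<open>z\<^sup>T B\<^sub>c\<^sub>o z = \<parallel>y\<parallel>\<^sub>A\<^sup>2 - \<parallel>T y\<parallel>\<^sub>A\<^sup>2 + (A T y)\<^sup>T B (A T y)\<close>, which is positive for \<open>y \<noteq> 0\<close>.\<close>

lemma scalar_prod_mult_transpose:
  fixes M :: "real mat"
  assumes "M \<in> carrier_mat n m" "u \<in> carrier_vec n" "v \<in> carrier_vec m"
  shows "u \<bullet> (M *\<^sub>v v) = (transpose_mat M *\<^sub>v u) \<bullet> v"
  using transpose_vec_mult_scalar[OF assms(1,3,2)] by simp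

lemma scalar_prod_symmetric_mat:
  fixes A :: "real mat"
  assumes A: "A \<in> carrier_mat n n" "transpose_mat A = A"
    and u: "u \<in> carrier_vec n" and v: "v \<in> carrier_vec n"
  shows "u \<bullet> (A *\<^sub>v v) = v \<bullet> (A *\<^sub>v u)"
  using scalar_prod_mult_transpose[OF A(1) u v] A u v by (simp add: comm_scalar_prod[of _ n])

lemma transpose_eq_if_form_symmetric:
  fixes M :: "real mat"
  assumes M: "M \<in> carrier_mat n n"
    and sym: "\<And>u v. u \<in> carrier_vec n \<Longrightarrow> v \<in> carrier_vec n \<Longrightarrow> u \<bullet> (M *\<^sub>v v) = v \<bullet> (M *\<^sub>v u)"
  shows "transpose_mat M = M"
proof (rule eq_matI)
  fix i j assume i: "i < dim_row M" and j: "j < dim_col M"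
  have "M $$ (j, i) = M $$ (i, j)"
    using sym[of "unit_vec n j" "unit_vec n i"] i j M by (simp add: scalar_prod_left_unit)
  then show "transpose_mat M $$ (i, j) = M $$ (i, j)" using i j M by auto
qed (use M in auto)

lemma scalar_prod_self_eq_0:
  fixes v :: "real vec"
  assumes v: "v \<in> carrier_vec n" and z: "v \<bullet> v = 0"
  shows "v = 0\<^sub>v n"
proof -
  have "(\<Sum>i<n. v $ i * v $ i) = 0" using z v by (simp add: scalar_prod_def lessThan_atLeast0)
  then have "\<forall>i<n. v $ i * v $ i = 0" by (subst (asm) sum_nonneg_eq_0_iff) auto
  then show ?thesis using v by (intro eq_vecI) auto
qed

lemma one_minus_mult_mat_vec:
  fixes M :: "real mat"
  assumes "M \<in> carrier_mat n n" "y \<in> carrier_vec n"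
  shows "(1\<^sub>m n - M) *\<^sub>v y = y - M *\<^sub>v y"
  using minus_mult_distrib_mat_vec[OF one_carrier_mat assms] assms(2) by simp

lemma spdD:
  assumes "spd A n"
  shows "A \<in> carrier_mat n n" "transpose_mat A = A"
    and "\<And>v. v \<in> carrier_vec n \<Longrightarrow> v \<noteq> 0\<^sub>v n \<Longrightarrow> v \<bullet> (A *\<^sub>v v) > 0"
  using assms by (auto simp: spd_def)

lemma spd_form_nonneg:
  assumes A: "spd A n" and v: "v \<in> carrier_vec n"
  shows "0 \<le> v \<bullet> (A *\<^sub>v v)"
  using spdD[OF A] v by (cases "v = 0\<^sub>v n") (auto intro: less_imp_le)

lemma spd_mult_vec_surj:
  assumes A: "spd A n" and z: "z \<in> carrier_vec n"
  obtains y where "y \<in> carrier_vec n" "z = A *\<^sub>v y"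
proof -
  have Ac: "A \<in> carrier_mat n n" using spdD[OF A] by simp
  have "det A \<noteq> 0"
  proof
    assume "det A = 0"
    then obtain v where "v \<in> carrier_vec n" "v \<noteq> 0\<^sub>v n" "A *\<^sub>v v = 0\<^sub>v n"
      using det_0_iff_vec_prod_zero[OF Ac] by auto
    with spdD(3)[OF A] show False by fastforce
  qed
  from det_non_zero_imp_unit[OF Ac this, of undefined]
  obtain Ai where Ai: "Ai \<in> carrier_mat n n" "A * Ai = 1\<^sub>m n"
    using Ac by (auto simp: Units_def ring_mat_simps)
  show thesis
  proof
    show "Ai *\<^sub>v z \<in> carrier_vec n" using Ai z by simp
    show "z = A *\<^sub>v (Ai *\<^sub>v z)" using Ai Ac z by (metis assoc_mult_mat_vec one_mult_mat_vec)
  qed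
qed

lemma galerkin_form_eq:
  fixes A P :: "real mat"
  assumes A: "A \<in> carrier_mat m m" and P: "P \<in> carrier_mat m k" and v: "v \<in> carrier_vec k"
  shows "v \<bullet> ((transpose_mat P * A * P) *\<^sub>v v) = (P *\<^sub>v v) \<bullet> (A *\<^sub>v (P *\<^sub>v v))"
proof -
  have Pt: "transpose_mat P \<in> carrier_mat k m" using P by simp
  have PtA: "transpose_mat P * A \<in> carrier_mat k m" using Pt A by simp
  have "(transpose_mat P * A * P) *\<^sub>v v = transpose_mat P *\<^sub>v (A *\<^sub>v (P *\<^sub>v v))"
    using assoc_mult_mat_vec[OF PtA P v] assoc_mult_mat_vec[OF Pt A, of "P *\<^sub>v v"] P v by simp
  moreover have "v \<bullet> (transpose_mat P *\<^sub>v (A *\<^sub>v (P *\<^sub>v v))) = (P *\<^sub>v v) \<bullet> (A *\<^sub>v (P *\<^sub>v v))"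
    using scalar_prod_mult_transpose[OF Pt v, of "A *\<^sub>v (P *\<^sub>v v)"] A P v
    by (simp add: comm_scalar_prod[of _ m])
  ultimately show ?thesis by simp
qed

lemma spd_galerkin:
  fixes A P :: "real mat"
  assumes A: "spd A m" and P: "P \<in> carrier_mat m k" and rank: "full_col_rank P"
  shows "spd (transpose_mat P * A * P) k"
proof -
  have Ac: "A \<in> carrier_mat m m" and At: "transpose_mat A = A" using spdD[OF A] by auto
  have Pt: "transpose_mat P \<in> carrier_mat k m" using P by simp
  have PtA: "transpose_mat P * A \<in> carrier_mat k m" using Pt Ac by simp
  have "transpose_mat (transpose_mat P * A * P) = transpose_mat P * transpose_mat (transpose_mat P * A)"
    using transpose_mult[OF PtA P] by simp
  also have "\<dots> = transpose_mat P * A * P"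
    using transpose_mult[OF Pt Ac] At Pt Ac P by simp
  finally have sym: "transpose_mat (transpose_mat P * A * P) = transpose_mat P * A * P" .
  have "v \<bullet> ((transpose_mat P * A * P) *\<^sub>v v) > 0" if "v \<in> carrier_vec k" "v \<noteq> 0\<^sub>v k" for v
    using galerkin_form_eq[OF Ac P] spdD(3)[OF A, of "P *\<^sub>v v"] rank P that
    by (auto simp: full_col_rank_def)
  then show ?thesis using sym PtA P by (simp add: spd_def)
qed
definition a_selfadjoint :: "real mat \<Rightarrow> real mat \<Rightarrow> nat \<Rightarrow> bool" where
  "a_selfadjoint A T n \<longleftrightarrow>
     (\<forall>u \<in> carrier_vec n. \<forall>v \<in> carrier_vec n. u \<bullet> (A *\<^sub>v (T *\<^sub>v v)) = v \<bullet> (A *\<^sub>v (T *\<^sub>v u)))"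

definition a_nonexpansive :: "real mat \<Rightarrow> real mat \<Rightarrow> nat \<Rightarrow> bool" where
  "a_nonexpansive A E n \<longleftrightarrow> E \<in> carrier_mat n n \<and>
     (\<forall>y \<in> carrier_vec n. (E *\<^sub>v y) \<bullet> (A *\<^sub>v (E *\<^sub>v y)) \<le> y \<bullet> (A *\<^sub>v y))"

text \<open>In the \<open>A\<close>-inner product: \<open>T\<close> is selfadjoint with \<open>T\<^sup>2 \<le> T \<le> I\<close>, i.e. its
  spectrum lies in \<open>[0, 1]\<close>.\<close>

definition a_nonneg_contraction :: "real mat \<Rightarrow> real mat \<Rightarrow> nat \<Rightarrow> bool" where
  "a_nonneg_contraction A T n \<longleftrightarrow> T \<in> carrier_mat n n \<and> a_selfadjoint A T n \<and>
     (\<forall>y \<in> carrier_vec n. (T *\<^sub>v y) \<bullet> (A *\<^sub>v (T *\<^sub>v y)) \<le> y \<bullet> (A *\<^sub>v (T *\<^sub>v y)) \<and>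
                          y \<bullet> (A *\<^sub>v (T *\<^sub>v y)) \<le> y \<bullet> (A *\<^sub>v y))"

lemma a_nonneg_contraction_zero:
  assumes "spd A n"
  shows "a_nonneg_contraction A (0\<^sub>m n n) n"
proof -
  have "0\<^sub>m n n *\<^sub>v v = 0\<^sub>v n" if "v \<in> carrier_vec n" for v :: "real vec"
    using that by (intro eq_vecI) auto
  moreover have "A *\<^sub>v 0\<^sub>v n = 0\<^sub>v n" using spdD(1)[OF assms] by (intro eq_vecI) auto
  ultimately show ?thesis using spd_form_nonneg[OF assms] spdD(1)[OF assms]
    by (simp add: a_nonneg_contraction_def a_selfadjoint_def)
qed

lemma preconditioner_form_eq:
  fixes A X :: "real mat"
  assumes A: "A \<in> carrier_mat n n" "transpose_mat A = A" and X: "X \<in> carrier_mat n n"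
    and x: "x \<in> carrier_vec n" and y: "y \<in> carrier_vec n"
  shows "(A *\<^sub>v x) \<bullet> (X *\<^sub>v (A *\<^sub>v y)) = x \<bullet> (A *\<^sub>v y) - x \<bullet> (A *\<^sub>v ((1\<^sub>m n - X * A) *\<^sub>v y))"
proof -
  have "(1\<^sub>m n - X * A) *\<^sub>v y = y - X *\<^sub>v (A *\<^sub>v y)"
    using one_minus_mult_mat_vec[of "X * A" n y] A X y by simp
  then have "x \<bullet> (A *\<^sub>v ((1\<^sub>m n - X * A) *\<^sub>v y)) = x \<bullet> (A *\<^sub>v y) - x \<bullet> (A *\<^sub>v (X *\<^sub>v (A *\<^sub>v y)))"
    using A X x y by (simp add: mult_minus_distrib_mat_vec[of _ n n] scalar_prod_minus_distrib[of _ n])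
  moreover have "x \<bullet> (A *\<^sub>v (X *\<^sub>v (A *\<^sub>v y))) = (A *\<^sub>v x) \<bullet> (X *\<^sub>v (A *\<^sub>v y))"
    using scalar_prod_mult_transpose[OF A(1) x, of "X *\<^sub>v (A *\<^sub>v y)"] A X y by simp
  ultimately show ?thesis by simp
qed

lemma preconditioner_symmetric_if_error_a_selfadjoint:
  fixes A X :: "real mat"
  assumes A: "spd A n" and X: "X \<in> carrier_mat n n" and T: "a_selfadjoint A (1\<^sub>m n - X * A) n"
  shows "transpose_mat X = X"
proof (rule transpose_eq_if_form_symmetric[OF X])
  fix u v :: "real vec" assume "u \<in> carrier_vec n" "v \<in> carrier_vec n"
  then obtain x y where x: "x \<in> carrier_vec n" "u = A *\<^sub>v x" and y: "y \<in> carrier_vec n" "v = A *\<^sub>v y"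
    using spd_mult_vec_surj[OF A] by metis
  have Ac: "A \<in> carrier_mat n n" and At: "transpose_mat A = A" using spdD[OF A] by auto
  show "u \<bullet> (X *\<^sub>v v) = v \<bullet> (X *\<^sub>v u)"
    unfolding x(2) y(2) preconditioner_form_eq[OF Ac At X x(1) y(1)] preconditioner_form_eq[OF Ac At X y(1) x(1)]
    using scalar_prod_symmetric_mat[OF Ac At x(1) y(1)] T x(1) y(1) by (simp add: a_selfadjoint_def)
qed

text \<open>The bound \<open>X A X \<le> X\<close> is \<open>X \<le> A\<^sup>-\<^sup>1\<close> stated without the inverse.\<close>

lemma preconditioner_bounds_if_error_a_nonneg_contraction:
  fixes A X :: "real mat"
  assumes A: "spd A n" and X: "X \<in> carrier_mat n n"
    and T: "a_nonneg_contraction A (1\<^sub>m n - X * A) n" and z: "z \<in> carrier_vec n"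
  shows "0 \<le> z \<bullet> (X *\<^sub>v z)" "(X *\<^sub>v z) \<bullet> (A *\<^sub>v (X *\<^sub>v z)) \<le> z \<bullet> (X *\<^sub>v z)"
proof -
  have Ac: "A \<in> carrier_mat n n" and At: "transpose_mat A = A" using spdD[OF A] by auto
  obtain y where y: "y \<in> carrier_vec n" and zy: "z = A *\<^sub>v y" using spd_mult_vec_surj[OF A z] .
  let ?T = "1\<^sub>m n - X * A"
  define w where "w = ?T *\<^sub>v y"
  have Ty: "w = y - X *\<^sub>v z"
    using one_minus_mult_mat_vec[of "X * A" n y] Ac X y zy by (simp add: w_def)
  have w: "w \<in> carrier_vec n" using Ty X y z by simp
  have Xz: "X *\<^sub>v z = y - w" using Ty X y z by auto
  have form: "z \<bullet> (X *\<^sub>v z) = y \<bullet> (A *\<^sub>v y) - y \<bullet> (A *\<^sub>v w)"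
    unfolding zy w_def by (rule preconditioner_form_eq[OF Ac At X y y])
  have T1: "w \<bullet> (A *\<^sub>v w) \<le> y \<bullet> (A *\<^sub>v w)" and T2: "y \<bullet> (A *\<^sub>v w) \<le> y \<bullet> (A *\<^sub>v y)"
    using T y by (auto simp: a_nonneg_contraction_def w_def)
  have "(X *\<^sub>v z) \<bullet> (A *\<^sub>v (X *\<^sub>v z)) = y \<bullet> (A *\<^sub>v y) - y \<bullet> (A *\<^sub>v w) - (w \<bullet> (A *\<^sub>v y) - w \<bullet> (A *\<^sub>v w))"
    unfolding Xz using Ac y w
    by (simp add: mult_minus_distrib_mat_vec[of _ n n] scalar_prod_minus_distrib[of _ n]
        minus_scalar_prod_distrib[of _ n])
  also have "w \<bullet> (A *\<^sub>v y) = y \<bullet> (A *\<^sub>v w)" using scalar_prod_symmetric_mat[OF Ac At w y] .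
  finally show "0 \<le> z \<bullet> (X *\<^sub>v z)" "(X *\<^sub>v z) \<bullet> (A *\<^sub>v (X *\<^sub>v z)) \<le> z \<bullet> (X *\<^sub>v z)"
    using form T1 T2 by simp_all
qed
lemma form_le_twice_gs_part:
  fixes A :: "real mat"
  assumes A: "spd A n" and v: "v \<in> carrier_vec n"
  shows "v \<bullet> (A *\<^sub>v v) \<le> 2 * (v \<bullet> (gs_part A *\<^sub>v v))"
proof -
  have Ac: "A \<in> carrier_mat n n" and At: "transpose_mat A = A" using spdD[OF A] by auto
  define G where "G = gs_part A"
  define D where "D = mat n n (\<lambda>(i,j). if i = j then A $$ (i,j) else 0)"
  have Gc: "G \<in> carrier_mat n n" using Ac by (auto simp: G_def gs_part_def)
  have Dc: "D \<in> carrier_mat n n" by (auto simp: D_def)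
  have Aij: "\<And>i j. i < n \<Longrightarrow> j < n \<Longrightarrow> A $$ (j, i) = A $$ (i, j)"
    using At Ac by (metis carrier_matD index_transpose_mat(1))
  have G_sym_part: "G + transpose_mat G = A + D"
    by (rule eq_matI, insert Ac Aij, auto simp: G_def D_def gs_part_def)
  have diag_pos: "A $$ (i,i) > 0" if i: "i < n" for i
  proof -
    have "unit_vec n i \<noteq> 0\<^sub>v n" using i by (metis index_unit_vec(1) index_zero_vec(1) zero_neq_one)
    then show ?thesis using spdD(3)[OF A, of "unit_vec n i"] Ac i by (simp add: scalar_prod_left_unit)
  qed
  have "D *\<^sub>v v = vec n (\<lambda>i. A $$ (i,i) * v $ i)"
  proof (rule eq_vecI)
    fix i assume "i < dim_vec (vec n (\<lambda>i. A $$ (i, i) * v $ i))"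
    then have i: "i < n" by simp
    have "row D i = A $$ (i,i) \<cdot>\<^sub>v unit_vec n i"
      by (rule eq_vecI, insert i, auto simp: D_def unit_vec_def)
    then show "(D *\<^sub>v v) $ i = vec n (\<lambda>i. A $$ (i, i) * v $ i) $ i"
      using i v Dc by (simp add: scalar_prod_left_unit)
  qed (use Dc in auto)
  moreover have "0 \<le> v $ i * (A $$ (i,i) * v $ i)" if "i < n" for i
    using mult_nonneg_nonneg[OF zero_le_square less_imp_le[OF diag_pos[OF that]], of "v $ i"]
    by (simp add: algebra_simps)
  ultimately have D_nonneg: "v \<bullet> (D *\<^sub>v v) \<ge> 0"
    using v by (auto simp: scalar_prod_def intro!: sum_nonneg)
  have "2 * (v \<bullet> (G *\<^sub>v v)) = v \<bullet> (G *\<^sub>v v) + v \<bullet> (transpose_mat G *\<^sub>v v)"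
    using scalar_prod_mult_transpose[OF Gc v v] Gc v by (simp add: comm_scalar_prod[of _ n])
  also have "\<dots> = v \<bullet> ((G + transpose_mat G) *\<^sub>v v)"
    using Gc v by (simp add: add_mult_distrib_mat_vec[of _ n n] scalar_prod_add_distrib[of _ n])
  also have "\<dots> = v \<bullet> (A *\<^sub>v v) + v \<bullet> (D *\<^sub>v v)"
    unfolding G_sym_part using Ac Dc v
    by (simp add: add_mult_distrib_mat_vec[of _ n n] scalar_prod_add_distrib[of _ n])
  finally show ?thesis using D_nonneg by (simp add: G_def)
qed

lemma a_nonexpansive_one_minus_right_inverse:
  fixes A S G :: "real mat"
  assumes A: "A \<in> carrier_mat n n" "transpose_mat A = A"
    and S: "S \<in> carrier_mat n n" and G: "G \<in> carrier_mat n n" and GS: "G * S = 1\<^sub>m n"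
    and bound: "\<And>v. v \<in> carrier_vec n \<Longrightarrow> v \<bullet> (A *\<^sub>v v) \<le> 2 * (v \<bullet> (G *\<^sub>v v))"
  shows "a_nonexpansive A (1\<^sub>m n - S * A) n"
  unfolding a_nonexpansive_def
proof (intro conjI ballI)
  show "1\<^sub>m n - S * A \<in> carrier_mat n n" by (rule minus_carrier_mat) (use S A in simp)
  fix y :: "real vec" assume y: "y \<in> carrier_vec n"
  define w where "w = S *\<^sub>v (A *\<^sub>v y)"
  have w: "w \<in> carrier_vec n" using A S y by (simp add: w_def)
  have Ey: "(1\<^sub>m n - S * A) *\<^sub>v y = y - w"
    using one_minus_mult_mat_vec[of "S * A" n y] A S y by (simp add: w_def)
  have Gw: "G *\<^sub>v w = A *\<^sub>v y"
    using GS assoc_mult_mat_vec[OF G S, of "A *\<^sub>v y"] A y by (simp add: w_def)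
  have "(y - w) \<bullet> (A *\<^sub>v (y - w)) = y \<bullet> (A *\<^sub>v y) - y \<bullet> (A *\<^sub>v w) - (w \<bullet> (A *\<^sub>v y) - w \<bullet> (A *\<^sub>v w))"
    using A y w by (simp add: mult_minus_distrib_mat_vec[of _ n n] scalar_prod_minus_distrib[of _ n]
        minus_scalar_prod_distrib[of _ n])
  also have "y \<bullet> (A *\<^sub>v w) = w \<bullet> (A *\<^sub>v y)" using scalar_prod_symmetric_mat[OF A y w] .
  also have "w \<bullet> (A *\<^sub>v y) = w \<bullet> (G *\<^sub>v w)" using Gw by simp
  finally show "((1\<^sub>m n - S * A) *\<^sub>v y) \<bullet> (A *\<^sub>v ((1\<^sub>m n - S * A) *\<^sub>v y)) \<le> y \<bullet> (A *\<^sub>v y)"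
    using Ey bound[OF w] by simp
qed

lemma gauss_seidel_a_nonexpansive:
  fixes A S :: "real mat"
  assumes A: "spd A n" and S: "S \<in> carrier_mat n n" and SG: "S * gs_part A = 1\<^sub>m n"
  shows "a_nonexpansive A (1\<^sub>m n - S * A) n" "a_nonexpansive A (1\<^sub>m n - transpose_mat S * A) n"
proof -
  have Ac: "A \<in> carrier_mat n n" and At: "transpose_mat A = A" using spdD[OF A] by auto
  define G where "G = gs_part A"
  have G: "G \<in> carrier_mat n n" using Ac by (auto simp: G_def gs_part_def)
  have GS: "G * S = 1\<^sub>m n" using mat_mult_left_right_inverse[OF S G] SG by (simp add: G_def)
  have GSt: "transpose_mat G * transpose_mat S = 1\<^sub>m n"
    using SG transpose_mult[OF S G] by (simp add: G_def)
  have bound: "v \<bullet> (A *\<^sub>v v) \<le> 2 * (v \<bullet> (G *\<^sub>v v))" if "v \<in> carrier_vec n" for v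
    using form_le_twice_gs_part[OF A that] by (simp add: G_def)
  have "v \<bullet> (transpose_mat G *\<^sub>v v) = v \<bullet> (G *\<^sub>v v)" if v: "v \<in> carrier_vec n" for v
    using scalar_prod_mult_transpose[OF G v v] G v by (simp add: comm_scalar_prod[of _ n])
  then have bound_t: "v \<bullet> (A *\<^sub>v v) \<le> 2 * (v \<bullet> (transpose_mat G *\<^sub>v v))" if "v \<in> carrier_vec n" for v
    using bound that by simp
  show "a_nonexpansive A (1\<^sub>m n - S * A) n"
    by (rule a_nonexpansive_one_minus_right_inverse[OF Ac At S G GS bound])
  show "a_nonexpansive A (1\<^sub>m n - transpose_mat S * A) n"
    by (rule a_nonexpansive_one_minus_right_inverse[OF Ac At _ _ GSt bound_t]) (use S G in simp_all)
qed

lemma smoother_a_adjoint: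
  fixes A S :: "real mat"
  assumes A: "A \<in> carrier_mat n n" "transpose_mat A = A" and S: "S \<in> carrier_mat n n"
    and u: "u \<in> carrier_vec n" and v: "v \<in> carrier_vec n"
  shows "u \<bullet> (A *\<^sub>v ((1\<^sub>m n - transpose_mat S * A) *\<^sub>v v)) = ((1\<^sub>m n - S * A) *\<^sub>v u) \<bullet> (A *\<^sub>v v)"
proof -
  have St: "transpose_mat S \<in> carrier_mat n n" using S by simp
  have Av: "A *\<^sub>v v \<in> carrier_vec n" and Au: "A *\<^sub>v u \<in> carrier_vec n" using A u v by auto
  have "u \<bullet> (A *\<^sub>v (transpose_mat S *\<^sub>v (A *\<^sub>v v))) = (A *\<^sub>v u) \<bullet> (transpose_mat S *\<^sub>v (A *\<^sub>v v))"
    using scalar_prod_mult_transpose[OF A(1) u, of "transpose_mat S *\<^sub>v (A *\<^sub>v v)"] A St Av by simp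
  also have "\<dots> = (S *\<^sub>v (A *\<^sub>v u)) \<bullet> (A *\<^sub>v v)"
    using scalar_prod_mult_transpose[OF St Au Av] by simp
  finally have "u \<bullet> (A *\<^sub>v (transpose_mat S *\<^sub>v (A *\<^sub>v v))) = (S *\<^sub>v (A *\<^sub>v u)) \<bullet> (A *\<^sub>v v)" .
  then show ?thesis
    using one_minus_mult_mat_vec[of "transpose_mat S * A" n v] one_minus_mult_mat_vec[of "S * A" n u]
      A u v St S Av Au
    by (simp add: mult_minus_distrib_mat_vec[of _ n n] scalar_prod_minus_distrib[of _ n]
        minus_scalar_prod_distrib[of _ n])
qed
lemma a_nonneg_contraction_sandwich:
  fixes A C E E' :: "real mat"
  assumes A: "A \<in> carrier_mat n n" "transpose_mat A = A"
    and C: "a_nonneg_contraction A C n" and E: "a_nonexpansive A E n" and E': "a_nonexpansive A E' n"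
    and adjoint: "\<And>u v. u \<in> carrier_vec n \<Longrightarrow> v \<in> carrier_vec n \<Longrightarrow>
                u \<bullet> (A *\<^sub>v (E' *\<^sub>v v)) = (E *\<^sub>v u) \<bullet> (A *\<^sub>v v)"
  shows "a_nonneg_contraction A (E' * C * E) n"
proof -
  have Cc: "C \<in> carrier_mat n n" and Ec: "E \<in> carrier_mat n n" and E'c: "E' \<in> carrier_mat n n"
    using C E E' by (auto simp: a_nonneg_contraction_def a_nonexpansive_def)
  have app: "(E' * C * E) *\<^sub>v y = E' *\<^sub>v (C *\<^sub>v (E *\<^sub>v y))" if "y \<in> carrier_vec n" for y
    using that Cc Ec E'c by (simp add: assoc_mult_mat_vec[of _ n n] del: assoc_mult_mat)
  have form: "u \<bullet> (A *\<^sub>v ((E' * C * E) *\<^sub>v v)) = (E *\<^sub>v u) \<bullet> (A *\<^sub>v (C *\<^sub>v (E *\<^sub>v v)))"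
    if u: "u \<in> carrier_vec n" and v: "v \<in> carrier_vec n" for u v
    using app[OF v] adjoint[OF u, of "C *\<^sub>v (E *\<^sub>v v)"] Cc Ec v by simp
  have "a_selfadjoint A (E' * C * E) n"
    unfolding a_selfadjoint_def
    using form C Ec by (simp add: a_nonneg_contraction_def a_selfadjoint_def)
  moreover have "((E' * C * E) *\<^sub>v y) \<bullet> (A *\<^sub>v ((E' * C * E) *\<^sub>v y)) \<le> y \<bullet> (A *\<^sub>v ((E' * C * E) *\<^sub>v y)) \<and>
      y \<bullet> (A *\<^sub>v ((E' * C * E) *\<^sub>v y)) \<le> y \<bullet> (A *\<^sub>v y)" if y: "y \<in> carrier_vec n" for y
  proof -
    define x where "x = E *\<^sub>v y"
    define w where "w = C *\<^sub>v x"
    have x: "x \<in> carrier_vec n" and w: "w \<in> carrier_vec n" using Ec Cc y by (auto simp: x_def w_def)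
    have "(w \<bullet> (A *\<^sub>v w) \<le> x \<bullet> (A *\<^sub>v w)) \<and> x \<bullet> (A *\<^sub>v w) \<le> x \<bullet> (A *\<^sub>v x)"
      using C x by (simp add: a_nonneg_contraction_def w_def)
    moreover have "(E' *\<^sub>v w) \<bullet> (A *\<^sub>v (E' *\<^sub>v w)) \<le> w \<bullet> (A *\<^sub>v w)"
      using E' w by (simp add: a_nonexpansive_def)
    moreover have "x \<bullet> (A *\<^sub>v x) \<le> y \<bullet> (A *\<^sub>v y)" using E y by (simp add: a_nonexpansive_def x_def)
    ultimately show ?thesis
      using app[OF y] form[OF y y] by (simp add: x_def w_def)
  qed
  ultimately show ?thesis using Cc Ec E'c by (simp add: a_nonneg_contraction_def)
qed

lemma coarse_correction_mult_vec:
  fixes A P B' :: "real mat"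
  assumes A: "A \<in> carrier_mat n n" and P: "P \<in> carrier_mat n m" and B': "B' \<in> carrier_mat m m"
  shows "P * B' * transpose_mat P * A \<in> carrier_mat n n"
    and "y \<in> carrier_vec n \<Longrightarrow>
      (P * B' * transpose_mat P * A) *\<^sub>v y = P *\<^sub>v (B' *\<^sub>v (transpose_mat P *\<^sub>v (A *\<^sub>v y)))"
proof -
  have PB: "P * B' \<in> carrier_mat n m" using P B' by simp
  have PBP: "P * B' * transpose_mat P \<in> carrier_mat n n" using PB P by simp
  then show "P * B' * transpose_mat P * A \<in> carrier_mat n n" using A by simp
  assume y: "y \<in> carrier_vec n"
  have "(P * B' * transpose_mat P * A) *\<^sub>v y = (P * B' * transpose_mat P) *\<^sub>v (A *\<^sub>v y)"
    by (rule assoc_mult_mat_vec[OF PBP A y])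
  also have "\<dots> = (P * B') *\<^sub>v (transpose_mat P *\<^sub>v (A *\<^sub>v y))"
    by (rule assoc_mult_mat_vec[OF PB]) (use P A y in auto)
  also have "\<dots> = P *\<^sub>v (B' *\<^sub>v (transpose_mat P *\<^sub>v (A *\<^sub>v y)))"
    by (rule assoc_mult_mat_vec[OF P B'], insert P A y, simp)
  finally show "(P * B' * transpose_mat P * A) *\<^sub>v y = P *\<^sub>v (B' *\<^sub>v (transpose_mat P *\<^sub>v (A *\<^sub>v y)))" .
qed

lemma coarse_correction_form_eq:
  fixes A P B' :: "real mat"
  assumes A: "A \<in> carrier_mat n n" "transpose_mat A = A"
    and P: "P \<in> carrier_mat n m" and B': "B' \<in> carrier_mat m m"
    and u: "u \<in> carrier_vec n" and y: "y \<in> carrier_vec n"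
  shows "u \<bullet> (A *\<^sub>v ((1\<^sub>m n - P * B' * transpose_mat P * A) *\<^sub>v y))
    = u \<bullet> (A *\<^sub>v y) - (transpose_mat P *\<^sub>v (A *\<^sub>v u)) \<bullet> (B' *\<^sub>v (transpose_mat P *\<^sub>v (A *\<^sub>v y)))"
proof -
  define p where "p = B' *\<^sub>v (transpose_mat P *\<^sub>v (A *\<^sub>v y))"
  have p: "p \<in> carrier_vec m" using B' P A y by (simp add: p_def)
  have "(P * B' * transpose_mat P * A) *\<^sub>v y = P *\<^sub>v p"
    using coarse_correction_mult_vec(2)[OF A(1) P B' y] by (simp add: p_def)
  then have "u \<bullet> (A *\<^sub>v ((1\<^sub>m n - P * B' * transpose_mat P * A) *\<^sub>v y)) = u \<bullet> (A *\<^sub>v y) - u \<bullet> (A *\<^sub>v (P *\<^sub>v p))"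
    using one_minus_mult_mat_vec[OF coarse_correction_mult_vec(1)[OF A(1) P B'] y] A P B' p u y
    by (simp add: mult_minus_distrib_mat_vec[of _ n n] scalar_prod_minus_distrib[of _ n])
  also have "u \<bullet> (A *\<^sub>v (P *\<^sub>v p)) = (transpose_mat P *\<^sub>v (A *\<^sub>v u)) \<bullet> p"
    using scalar_prod_mult_transpose[OF A(1) u, of "P *\<^sub>v p"] scalar_prod_mult_transpose[OF P _ p, of "A *\<^sub>v u"]
      A P p u by simp
  finally show ?thesis by (simp add: p_def)
qed

text \<open>The hypotheses on \<open>B'\<close> say \<open>0 \<le> B' \<le> (P\<^sup>T A P)\<^sup>-\<^sup>1\<close>; then \<open>I - P B' P\<^sup>T A\<close>
  lies between \<open>0\<close> and \<open>I\<close> because \<open>P (P\<^sup>T A P)\<^sup>-\<^sup>1 P\<^sup>T A\<close> is the \<open>A\<close>-orthogonal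
  projection onto the range of \<open>P\<close>.\<close>

lemma coarse_correction_a_nonneg_contraction:
  fixes A P B' :: "real mat"
  assumes A: "A \<in> carrier_mat n n" "transpose_mat A = A"
    and P: "P \<in> carrier_mat n m" and B': "B' \<in> carrier_mat m m" "transpose_mat B' = B'"
    and nonneg: "\<And>z. z \<in> carrier_vec m \<Longrightarrow> 0 \<le> z \<bullet> (B' *\<^sub>v z)"
    and bound: "\<And>z. z \<in> carrier_vec m \<Longrightarrow>
      (B' *\<^sub>v z) \<bullet> ((transpose_mat P * A * P) *\<^sub>v (B' *\<^sub>v z)) \<le> z \<bullet> (B' *\<^sub>v z)"
  shows "a_nonneg_contraction A (1\<^sub>m n - P * B' * transpose_mat P * A) n"
proof -
  let ?C = "1\<^sub>m n - P * B' * transpose_mat P * A"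
  let ?r = "\<lambda>y. transpose_mat P *\<^sub>v (A *\<^sub>v y)"
  have r: "?r y \<in> carrier_vec m" if "y \<in> carrier_vec n" for y using that A P by simp
  have Cc: "?C \<in> carrier_mat n n"
    by (rule minus_carrier_mat[OF coarse_correction_mult_vec(1)[OF A(1) P B'(1)]])
  have "a_selfadjoint A ?C n"
    unfolding a_selfadjoint_def
    using coarse_correction_form_eq[OF A P B'(1)] scalar_prod_symmetric_mat[OF A]
      scalar_prod_symmetric_mat[OF B'] r by simp
  moreover have "(?C *\<^sub>v y) \<bullet> (A *\<^sub>v (?C *\<^sub>v y)) \<le> y \<bullet> (A *\<^sub>v (?C *\<^sub>v y)) \<and>
      y \<bullet> (A *\<^sub>v (?C *\<^sub>v y)) \<le> y \<bullet> (A *\<^sub>v y)" if y: "y \<in> carrier_vec n" for y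
  proof -
    define p where "p = B' *\<^sub>v ?r y"
    have p: "p \<in> carrier_vec m" and Pp: "P *\<^sub>v p \<in> carrier_vec n"
      using B' P r[OF y] by (auto simp: p_def)
    have Cy: "?C *\<^sub>v y = y - P *\<^sub>v p"
      using one_minus_mult_mat_vec[OF coarse_correction_mult_vec(1)[OF A(1) P B'(1)] y]
        coarse_correction_mult_vec(2)[OF A(1) P B'(1) y] by (simp add: p_def)
    have "(P *\<^sub>v p) \<bullet> (A *\<^sub>v y) = ?r y \<bullet> p"
      using scalar_prod_mult_transpose[OF P _ p, of "A *\<^sub>v y"] A y Pp
      by (simp add: comm_scalar_prod[of _ n])
    moreover have "y \<bullet> (A *\<^sub>v (P *\<^sub>v p)) = (P *\<^sub>v p) \<bullet> (A *\<^sub>v y)"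
      using scalar_prod_symmetric_mat[OF A y Pp] .
    moreover have "(?C *\<^sub>v y) \<bullet> (A *\<^sub>v (?C *\<^sub>v y)) =
        y \<bullet> (A *\<^sub>v y) - y \<bullet> (A *\<^sub>v (P *\<^sub>v p)) - ((P *\<^sub>v p) \<bullet> (A *\<^sub>v y) - (P *\<^sub>v p) \<bullet> (A *\<^sub>v (P *\<^sub>v p)))"
      unfolding Cy using A y Pp
      by (simp add: mult_minus_distrib_mat_vec[of _ n n] scalar_prod_minus_distrib[of _ n]
          minus_scalar_prod_distrib[of _ n])
    moreover have "y \<bullet> (A *\<^sub>v (?C *\<^sub>v y)) = y \<bullet> (A *\<^sub>v y) - ?r y \<bullet> p"
      using coarse_correction_form_eq[OF A P B'(1) y y] by (simp add: p_def)
    moreover have "0 \<le> ?r y \<bullet> p" "(P *\<^sub>v p) \<bullet> (A *\<^sub>v (P *\<^sub>v p)) \<le> ?r y \<bullet> p"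
      using nonneg[OF r[OF y]] bound[OF r[OF y]] galerkin_form_eq[OF A(1) P p] by (simp_all add: p_def)
    ultimately show ?thesis by simp
  qed
  ultimately show ?thesis using Cc by (simp add: a_nonneg_contraction_def)
qed
lemma spd_inverse_of_gram:
  fixes B L :: "real mat"
  assumes B: "B \<in> carrier_mat n n" and L: "L \<in> carrier_mat n n"
    and inv: "B * (L * transpose_mat L) = 1\<^sub>m n"
  shows "spd B n"
proof -
  define M where "M = L * transpose_mat L"
  have Lt: "transpose_mat L \<in> carrier_mat n n" using L by simp
  have M: "M \<in> carrier_mat n n" using L by (simp add: M_def)
  have BM: "B * M = 1\<^sub>m n" using inv by (simp add: M_def)
  have MB: "M * B = 1\<^sub>m n" using mat_mult_left_right_inverse[OF B M BM] .
  have Mt: "transpose_mat M = M" using transpose_mult[OF L Lt] by (simp add: M_def)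
  have "M * transpose_mat B = 1\<^sub>m n" using arg_cong[OF BM, of transpose_mat] transpose_mult[OF B M] Mt by simp
  then have sym: "transpose_mat B = B"
    using assoc_mult_mat[OF B M, of "transpose_mat B" n] BM B by simp
  have pos: "x \<bullet> (B *\<^sub>v x) > 0" if x: "x \<in> carrier_vec n" and nz: "x \<noteq> 0\<^sub>v n" for x
  proof -
    define y where "y = B *\<^sub>v x"
    define w where "w = transpose_mat L *\<^sub>v y"
    have y: "y \<in> carrier_vec n" and w: "w \<in> carrier_vec n" using B Lt x by (simp_all add: y_def w_def)
    have "M *\<^sub>v y = x" using assoc_mult_mat_vec[OF M B x] MB x by (simp add: y_def)
    then have x_eq: "x = L *\<^sub>v w" using assoc_mult_mat_vec[OF L Lt y] by (simp add: M_def w_def)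
    have "x \<bullet> (B *\<^sub>v x) = y \<bullet> (L *\<^sub>v w)"
      using x_eq y w L by (simp add: comm_scalar_prod[of _ n] y_def)
    also have "\<dots> = w \<bullet> w" using scalar_prod_mult_transpose[OF L y w] by (simp add: w_def)
    finally have form: "x \<bullet> (B *\<^sub>v x) = w \<bullet> w" .
    have "w \<noteq> 0\<^sub>v n"
    proof
      assume "w = 0\<^sub>v n"
      then have "x = L *\<^sub>v 0\<^sub>v n" using x_eq by simp
      also have "\<dots> = 0\<^sub>v n" using L by (intro eq_vecI) auto
      finally show False using nz by simp
    qed
    then have "w \<bullet> w \<noteq> 0" using scalar_prod_self_eq_0[OF w] by blast
    moreover have "0 \<le> w \<bullet> w" unfolding scalar_prod_def by (intro sum_nonneg) simp
    ultimately show ?thesis using form by simp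
  qed
  show ?thesis using B sym pos by (simp add: spd_def)
qed
lemma spd_two_sided_correction:
  fixes A T B Bco :: "real mat"
  assumes A: "spd A n" and T: "a_nonneg_contraction A T n" and B: "spd B n"
    and Bco: "Bco \<in> carrier_mat n n"
    and eq: "1\<^sub>m n - Bco * A = T * (1\<^sub>m n - B * A) * T"
  shows "spd Bco n"
proof -
  have Ac: "A \<in> carrier_mat n n" and At: "transpose_mat A = A" using spdD[OF A] by auto
  have Bc: "B \<in> carrier_mat n n" and Bt: "transpose_mat B = B" using spdD[OF B] by auto
  have Tc: "T \<in> carrier_mat n n" using T by (simp add: a_nonneg_contraction_def)
  define F where "F = 1\<^sub>m n - B * A"
  define Tco where "Tco = 1\<^sub>m n - Bco * A"
  have Fc: "F \<in> carrier_mat n n" unfolding F_def by (rule minus_carrier_mat) (use Bc Ac in simp)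
  have T_adjoint: "u \<bullet> (A *\<^sub>v (T *\<^sub>v x)) = (T *\<^sub>v u) \<bullet> (A *\<^sub>v x)"
    if u: "u \<in> carrier_vec n" and x: "x \<in> carrier_vec n" for u x
    using T u x scalar_prod_symmetric_mat[OF Ac At x, of "T *\<^sub>v u"] Tc
    by (simp add: a_nonneg_contraction_def a_selfadjoint_def)
  have form: "u \<bullet> (A *\<^sub>v (Tco *\<^sub>v v)) =
      (T *\<^sub>v u) \<bullet> (A *\<^sub>v (T *\<^sub>v v)) - (A *\<^sub>v (T *\<^sub>v u)) \<bullet> (B *\<^sub>v (A *\<^sub>v (T *\<^sub>v v)))"
    if u: "u \<in> carrier_vec n" and v: "v \<in> carrier_vec n" for u v
  proof -
    have Tu: "T *\<^sub>v u \<in> carrier_vec n" and Tv: "T *\<^sub>v v \<in> carrier_vec n" using Tc u v by auto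
    have "Tco *\<^sub>v v = T *\<^sub>v (F *\<^sub>v (T *\<^sub>v v))"
      using eq Tc Fc v by (simp add: Tco_def F_def assoc_mult_mat_vec[of _ n n] del: assoc_mult_mat)
    then have "u \<bullet> (A *\<^sub>v (Tco *\<^sub>v v)) = (T *\<^sub>v u) \<bullet> (A *\<^sub>v (F *\<^sub>v (T *\<^sub>v v)))"
      using T_adjoint[OF u, of "F *\<^sub>v (T *\<^sub>v v)"] Fc Tv by simp
    then show ?thesis using preconditioner_form_eq[OF Ac At Bc Tu Tv] by (simp add: F_def)
  qed
  have "a_selfadjoint A Tco n"
    unfolding a_selfadjoint_def
    using form scalar_prod_symmetric_mat[OF Ac At] scalar_prod_symmetric_mat[OF Bc Bt] Tc Ac by simp
  then have sym: "transpose_mat Bco = Bco"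
    by (rule preconditioner_symmetric_if_error_a_selfadjoint[OF A Bco, folded Tco_def])
  have pos: "z \<bullet> (Bco *\<^sub>v z) > 0" if z: "z \<in> carrier_vec n" and nz: "z \<noteq> 0\<^sub>v n" for z
  proof -
    obtain y where y: "y \<in> carrier_vec n" and zy: "z = A *\<^sub>v y" using spd_mult_vec_surj[OF A z] .
    have "y \<noteq> 0\<^sub>v n" using nz zy Ac by auto
    then have y_pos: "y \<bullet> (A *\<^sub>v y) > 0" using spdD(3)[OF A y] by simp
    define w where "w = T *\<^sub>v y"
    have w: "w \<in> carrier_vec n" using Tc y by (simp add: w_def)
    have "z \<bullet> (Bco *\<^sub>v z) = y \<bullet> (A *\<^sub>v y) - y \<bullet> (A *\<^sub>v (Tco *\<^sub>v y))"
      unfolding zy Tco_def by (rule preconditioner_form_eq[OF Ac At Bco y y])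
    also have "\<dots> = y \<bullet> (A *\<^sub>v y) - w \<bullet> (A *\<^sub>v w) + (A *\<^sub>v w) \<bullet> (B *\<^sub>v (A *\<^sub>v w))"
      using form[OF y y] by (simp add: w_def)
    finally have z_form: "z \<bullet> (Bco *\<^sub>v z) = y \<bullet> (A *\<^sub>v y) - w \<bullet> (A *\<^sub>v w) + (A *\<^sub>v w) \<bullet> (B *\<^sub>v (A *\<^sub>v w))" .
    have contr: "w \<bullet> (A *\<^sub>v w) \<le> y \<bullet> (A *\<^sub>v y)"
      using T y by (force simp: a_nonneg_contraction_def w_def)
    show ?thesis
    proof (cases "w = 0\<^sub>v n")
      case True
      then have "w \<bullet> (A *\<^sub>v w) = 0" using Ac by simp
      then show ?thesis using z_form y_pos spd_form_nonneg[OF B, of "A *\<^sub>v w"] Ac w by simp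
    next
      case False
      then have "w \<bullet> (A *\<^sub>v w) > 0" using spdD(3)[OF A w] by simp
      then have "A *\<^sub>v w \<noteq> 0\<^sub>v n" using w by auto
      then have "(A *\<^sub>v w) \<bullet> (B *\<^sub>v (A *\<^sub>v w)) > 0" using spdD(3)[OF B] Ac w by simp
      then show ?thesis using z_form contr by simp
    qed
  qed
  show ?thesis using Bco sym pos by (simp add: spd_def)
qed

lemma galerkin_hierarchy_spd:
  fixes As Ps :: "nat \<Rightarrow> real mat" and nl :: "nat \<Rightarrow> nat"
  assumes top: "spd (As Lv) (nl Lv)"
    and interp: "\<And>l. l < Lv \<Longrightarrow> Ps l \<in> carrier_mat (nl (Suc l)) (nl l) \<and> full_col_rank (Ps l)"
    and galerkin: "\<And>l. l < Lv \<Longrightarrow> As l = transpose_mat (Ps l) * As (Suc l) * Ps l"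
    and l: "l \<le> Lv"
  shows "spd (As l) (nl l)"
  using l
proof (induction rule: inc_induct)
  case base
  show ?case by (rule top)
next
  case (step l)
  then show ?case using spd_galerkin[of "As (Suc l)" "nl (Suc l)" "Ps l" "nl l"] interp galerkin by simp
qed
lemma vcycle_error_a_nonneg_contraction:
  fixes As Ps Ss Bs :: "nat \<Rightarrow> real mat" and nl :: "nat \<Rightarrow> nat"
  assumes spd_levels: "\<And>l. l \<le> Lv \<Longrightarrow> spd (As l) (nl l)"
    and interp: "\<And>l. l < Lv \<Longrightarrow> Ps l \<in> carrier_mat (nl (Suc l)) (nl l)"
    and galerkin: "\<And>l. l < Lv \<Longrightarrow> As l = transpose_mat (Ps l) * As (Suc l) * Ps l"
    and smoother: "\<And>l. l \<le> Lv \<Longrightarrow> Ss l \<in> carrier_mat (nl l) (nl l) \<and>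
                        Ss l * gs_part (As l) = 1\<^sub>m (nl l)"
    and coarsest: "Bs 0 \<in> carrier_mat (nl 0) (nl 0)" "Bs 0 * As 0 = 1\<^sub>m (nl 0)"
    and vcycle: "\<And>l. 1 \<le> l \<Longrightarrow> l \<le> Lv \<Longrightarrow> Bs l \<in> carrier_mat (nl l) (nl l) \<and>
        1\<^sub>m (nl l) - Bs l * As l =
          (1\<^sub>m (nl l) - transpose_mat (Ss l) * As l)
        * (1\<^sub>m (nl l) - Ps (l - 1) * Bs (l - 1) * transpose_mat (Ps (l - 1)) * As l)
        * (1\<^sub>m (nl l) - Ss l * As l)"
    and l: "l \<le> Lv"
  shows "a_nonneg_contraction (As l) (1\<^sub>m (nl l) - Bs l * As l) (nl l)"
  using l
proof (induction l)
  case 0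
  have "1\<^sub>m (nl 0) - Bs 0 * As 0 = 0\<^sub>m (nl 0) (nl 0)"
    unfolding coarsest(2) by (rule minus_r_inv_mat) simp
  then show ?case using a_nonneg_contraction_zero[OF spd_levels] by simp
next
  case (Suc l)
  let ?A = "As (Suc l)" and ?n = "nl (Suc l)" and ?P = "Ps l" and ?S = "Ss (Suc l)"
  have A: "spd ?A ?n" using spd_levels Suc.prems .
  have Ac: "?A \<in> carrier_mat ?n ?n" and At: "transpose_mat ?A = ?A" using spdD[OF A] by auto
  have P: "?P \<in> carrier_mat ?n (nl l)" using interp Suc.prems by simp
  have coarse: "As l = transpose_mat ?P * ?A * ?P" using galerkin Suc.prems by simp
  have Bl: "Bs l \<in> carrier_mat (nl l) (nl l)" using coarsest vcycle[of l] Suc.prems by (cases l) auto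
  have IH: "a_nonneg_contraction (As l) (1\<^sub>m (nl l) - Bs l * As l) (nl l)" using Suc by simp
  have spd_l: "spd (As l) (nl l)" using spd_levels Suc.prems by simp
  have C: "a_nonneg_contraction ?A (1\<^sub>m ?n - ?P * Bs l * transpose_mat ?P * ?A) ?n"
  proof (rule coarse_correction_a_nonneg_contraction[OF Ac At P Bl])
    show "transpose_mat (Bs l) = Bs l"
      using preconditioner_symmetric_if_error_a_selfadjoint[OF spd_l Bl] IH
      by (simp add: a_nonneg_contraction_def)
  qed (use preconditioner_bounds_if_error_a_nonneg_contraction[OF spd_l Bl IH] coarse in simp_all)
  have S: "?S \<in> carrier_mat ?n ?n" "?S * gs_part ?A = 1\<^sub>m ?n" using smoother Suc.prems by simp_all
  have "a_nonneg_contraction ?A ((1\<^sub>m ?n - transpose_mat ?S * ?A)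
      * (1\<^sub>m ?n - ?P * Bs l * transpose_mat ?P * ?A) * (1\<^sub>m ?n - ?S * ?A)) ?n"
    by (rule a_nonneg_contraction_sandwich[OF Ac At C gauss_seidel_a_nonexpansive[OF A S]
          smoother_a_adjoint[OF Ac At S(1)]])
  then show ?case using vcycle[of "Suc l"] Suc.prems by simp
qed

theorem corollary3p2:
  fixes A :: "real mat" and n :: nat and k :: nat
    and Lv :: nat and nl :: "nat \<Rightarrow> nat"
    and As Ps Ss Bs :: "nat \<Rightarrow> real mat"
    and B Bco :: "real mat"
  assumes A_spd: "spd A n"
    and top_dim: "nl Lv = n" and top_A: "As Lv = A"
    and interp: "\<And>l. l < Lv \<Longrightarrow> Ps l \<in> carrier_mat (nl (Suc l)) (nl l) \<and> full_col_rank (Ps l)"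
    and galerkin: "\<And>l. l < Lv \<Longrightarrow> As l = transpose_mat (Ps l) * As (Suc l) * Ps l"
    and smoother: "\<And>l. l \<le> Lv \<Longrightarrow> Ss l \<in> carrier_mat (nl l) (nl l) \<and>
                        Ss l * gs_part (As l) = 1\<^sub>m (nl l)"
    and coarsest: "Bs 0 \<in> carrier_mat (nl 0) (nl 0)" "Bs 0 * As 0 = 1\<^sub>m (nl 0)"
    and vcycle: "\<And>l. 1 \<le> l \<Longrightarrow> l \<le> Lv \<Longrightarrow> Bs l \<in> carrier_mat (nl l) (nl l) \<and>
        1\<^sub>m (nl l) - Bs l * As l =
          (1\<^sub>m (nl l) - transpose_mat (Ss l) * As l)
        * (1\<^sub>m (nl l) - Ps (l - 1) * Bs (l - 1) * transpose_mat (Ps (l - 1)) * As l)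
        * (1\<^sub>m (nl l) - Ss l * As l)"
    and ic_welldef: "\<And>j. j < n \<Longrightarrow> iluk_pivot k A j > 0"
    and ic_prec: "B \<in> carrier_mat n n"
      "B * (ick_factor k A * transpose_mat (ick_factor k A)) = 1\<^sub>m n"
    and Bco: "Bco \<in> carrier_mat n n"
      "1\<^sub>m n - Bco * A = (1\<^sub>m n - transpose_mat (Bs Lv) * A) * (1\<^sub>m n - B * A) * (1\<^sub>m n - Bs Lv * A)"
  shows "spd Bco n"
proof -
  have levels: "spd (As l) (nl l)" if "l \<le> Lv" for l
    using galerkin_hierarchy_spd[of As Lv nl Ps, OF _ interp galerkin that] A_spd top_dim top_A by simp
  have "Ps l \<in> carrier_mat (nl (Suc l)) (nl l)" if "l < Lv" for l using interp[OF that] by simp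
  then have T: "a_nonneg_contraction A (1\<^sub>m n - Bs Lv * A) n"
    using vcycle_error_a_nonneg_contraction[where Lv = Lv, OF levels _ galerkin smoother coarsest vcycle order.refl]
      top_dim top_A by simp
  have BL: "Bs Lv \<in> carrier_mat n n" using coarsest vcycle[of Lv] top_dim by (cases Lv) auto
  have "transpose_mat (Bs Lv) = Bs Lv"
    using preconditioner_symmetric_if_error_a_selfadjoint[OF A_spd BL] T
    by (simp add: a_nonneg_contraction_def)
  moreover txt \<open>The positivity of the IC pivots is not needed: \<open>B\<close> is already SPD because
    \<open>ic_prec\<close> makes \<open>L L\<^sup>T\<close> invertible.\<close>
  have "ick_factor k A \<in> carrier_mat n n" using spdD(1)[OF A_spd] by (simp add: ick_factor_def)
  then have "spd B n" by (rule spd_inverse_of_gram[OF ic_prec(1) _ ic_prec(2)])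
  ultimately show ?thesis
    using spd_two_sided_correction[OF A_spd T _ Bco(1)] Bco(2) by simp
qed
end
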